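(* Let $m,n$ be positive integers. The $m\times n$ matrices $B_{1,1},\dots,B_{m,n-1}$ (that is, $B_{i,j}$ for $i\in[m]$, $j\in[n-1]$) together with $C_n$ are linearly independent.
   Context: For $i\in[m]$ and $j\in[n-1]$, $B_{i,j}$ is the $m\times n$ $(0,1)$-matrix whose $(i,j)$ entry is $1$, whose $(j+1)$-th column has all entries equal to $1$ except the $(i,j+1)$ entry which is $0$, and all of whose other entries are $0$. $C_n$ is the $m\times n$ $(0,1)$-matrix whose $n$-th column is all $1$'s and all other entries $0$. *)

theory Defs
  imports Complex_Main
begin

text \<open>An m x n matrix is represented as a function on 1-based indices
  (row r in {1..m}, column s in {1..n}); entries outside are irrelevant.\<close>

definition Bmat :: "nat \<Rightarrow> nat \<Rightarrow> nat \<Rightarrow> nat \<Rightarrow> real" where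
  "Bmat i j r s = (if r = i \<and> s = j then 1
                   else if s = j + 1 \<and> r \<noteq> i then 1 else 0)"

definition Cmat :: "nat \<Rightarrow> nat \<Rightarrow> nat \<Rightarrow> real" where
  "Cmat n r s = (if s = n then 1 else 0)"

end

theory Submission
  imports Defs
begin

text \<open>Read column by column, a vanishing combination forces the coefficients to vanish
  from left to right: in column 1 only the entry of \<open>B\<^sub>r\<^sub>,\<^sub>1\<close> is nonzero at row \<open>r\<close>;
  in column \<open>s + 1\<close> the contributions of the \<open>B\<^sub>i\<^sub>,\<^sub>s\<close> are already known to be zero, so
  again only \<open>B\<^sub>r\<^sub>,\<^sub>s\<^sub>+\<^sub>1\<close> remains; finally, column \<open>n\<close> isolates the coefficient
  of \<open>C\<^sub>n\<close>.\<close>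

lemma sum_Bmat_entry:
  assumes "r \<in> {1..m}" and "s \<in> {1..n}"
  shows "(\<Sum>i=1..m. \<Sum>j=1..n-1. a i j * Bmat i j r s) =
    (if s < n then a r s else 0) + (if 1 < s then (\<Sum>i\<in>{1..m}-{r}. a i (s-1)) else 0)"
proof -
  have inner: "(\<Sum>j=1..n-1. a i j * Bmat i j r s) =
      (if i = r \<and> s < n then a i s else 0) + (if i \<noteq> r \<and> 1 < s then a i (s-1) else 0)" for i
  proof -
    have "(\<Sum>j=1..n-1. a i j * Bmat i j r s) =
        (\<Sum>j=1..n-1. if j = s then of_bool (i = r) * a i j else 0) +
        (\<Sum>j=1..n-1. if j = s - 1 then of_bool (i \<noteq> r \<and> 1 < s) * a i j else 0)"
      unfolding sum.distrib[symmetric] using assms(2) by (intro sum.cong) (auto simp: Bmat_def)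
    also have "\<dots> = (if i = r \<and> s < n then a i s else 0) + (if i \<noteq> r \<and> 1 < s then a i (s-1) else 0)"
      using assms(2) by (auto simp: sum.delta)
    finally show ?thesis .
  qed
  have "(\<Sum>i=1..m. \<Sum>j=1..n-1. a i j * Bmat i j r s) =
      (\<Sum>i=1..m. if i = r then (if s < n then a i s else 0) else 0) +
      (\<Sum>i=1..m. if i \<in> {1..m}-{r} then (if 1 < s then a i (s-1) else 0) else 0)"
    unfolding inner sum.distrib[symmetric] by (intro sum.cong) auto
  also have "\<dots> = (if s < n then a r s else 0) + (if 1 < s then (\<Sum>i\<in>{1..m}-{r}. a i (s-1)) else 0)"
    using assms(1) by (auto simp: sum.delta sum.If_cases intro!: sum.cong)
  finally show ?thesis .
qed

lemma columns_vanish: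
  fixes a :: "nat \<Rightarrow> nat \<Rightarrow> 'a::comm_monoid_add"
  assumes entry: "\<And>r s. r \<in> {1..m} \<Longrightarrow> s \<in> {1..<n} \<Longrightarrow>
      a r s + (if 1 < s then (\<Sum>i\<in>{1..m}-{r}. a i (s-1)) else 0) = 0"
  shows "r \<in> {1..m} \<Longrightarrow> s \<in> {1..<n} \<Longrightarrow> a r s = 0"
proof (induction s arbitrary: r)
  case 0
  then show ?case by simp
next
  case (Suc t)
  have "(\<Sum>i\<in>{1..m}-{r}. a i t) = 0" if "1 < Suc t"
    using Suc.IH Suc.prems(2) that by (intro sum.neutral) auto
  then show ?case
    using entry[OF Suc.prems] by (simp split: if_splits)
qed

theorem mainTheorem7:
  fixes m n :: nat and a :: "nat \<Rightarrow> nat \<Rightarrow> real" and c :: real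
  assumes "1 \<le> m" and "1 \<le> n"
    and "\<forall>r\<in>{1..m}. \<forall>s\<in>{1..n}.
           (\<Sum>i=1..m. \<Sum>j=1..n-1. a i j * Bmat i j r s) + c * Cmat n r s = 0"
  shows "(\<forall>i\<in>{1..m}. \<forall>j\<in>{1..n-1}. a i j = 0) \<and> c = 0"
proof -
  have entry: "(if s < n then a r s else 0) + (if 1 < s then (\<Sum>i\<in>{1..m}-{r}. a i (s-1)) else 0)
      + (if s = n then c else 0) = 0" if "r \<in> {1..m}" "s \<in> {1..n}" for r s
    using assms(3)[rule_format, OF that] that unfolding sum_Bmat_entry[OF that] Cmat_def by auto
  have a_zero: "a r s = 0" if "r \<in> {1..m}" "s \<in> {1..<n}" for r s
    by (rule columns_vanish[OF _ that]) (use entry in fastforce)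
  have "(\<Sum>i\<in>{1..m}-{1}. a i (n-1)) = 0" if "1 < n"
    using that by (intro sum.neutral) (auto intro: a_zero)
  then have "c = 0"
    using entry[of 1 n] assms(1,2) by (simp split: if_splits)
  then show ?thesis
    using a_zero by auto
qed

end
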